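(* Let $\alpha > 1$, $\varepsilon > 0$, $\delta \in [0,1)$. For $q \in [0,1]$ define $$L(q) = \max\left\{p \in [q,1] : D^\delta_\alpha(\mathrm{Ber}(p)\|\mathrm{Ber}(q)) \le \varepsilon \ \text{and}\ D^\delta_\alpha(\mathrm{Ber}(q)\|\mathrm{Ber}(p)) \le \varepsilon\right\},$$ and define $\pi^*:\mathbb{Z}_{\ge 0}\to[0,1]$ by $\pi^*(0) = 0$ and $\pi^*(n) = L(\pi^*(n-1))$ for $n > 0$. Then $\pi^*$ is a partition selection primitive that is $(\delta,\alpha,\varepsilon)$-RDP for $\Delta_1 = 1$, and for every partition selection primitive $\pi$ that is $(\delta,\alpha,\varepsilon)$-RDP for $\Delta_1 = 1$ we have $\pi(n) \le \pi^*(n)$ for all $n \in \mathbb{N}$. (Equivalently, $\pi^*$ is the optimal partition selection primitive for $(\delta,\alpha,\varepsilon)$-RDP with $\Delta_1 = 1$.)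
   Context: $\mathrm{Ber}(p)$ is the Bernoulli distribution with success probability $p$. For $\alpha>1$, $D_\alpha(P\|Q) = \frac{1}{\alpha-1}\log\sum_x P(x)^\alpha Q(x)^{1-\alpha}$ (infinite if $P$ is not absolutely continuous w.r.t. $Q$), and $D^\delta_\alpha(P\|Q) = \inf\{D_\alpha(P'\|Q') : P = (1-\delta)P' + \delta P'',\ Q = (1-\delta)Q' + \delta Q''\}$ over probability distributions $P',P'',Q',Q''$. A randomized algorithm $M$ is $(\delta,\alpha,\varepsilon)$-RDP ($\delta$-approximate $(\alpha,\varepsilon)$-Rényi DP) with respect to a neighboring relation if $D^\delta_\alpha(M(X)\|M(X')) \le \varepsilon$ for all neighboring $X, X'$ (in both orders). Let $U$ be a universe; a dataset is $X \in \mathbb{Z}_{\ge0}^U$ (finitely supported), $X_u$ being the count of item $u$. Datasets $X, X'$ are neighbors under $L^1$ norm bound $\Delta$ (written $\Delta_1 = \Delta$) if $\|X - X'\|_1 \le \Delta$. A partition selection primitive is a function $\pi:\mathbb{Z}_{\ge0}\to[0,1]$ with $\pi(0)=0$; its mechanism $M_\pi$ outputs the random set containing each $u\in U$ independently with probability $\pi(X_u)$. $\pi$ is $(\delta,\alpha,\varepsilon)$-RDP for $\Delta_1=\Delta$ if $M_\pi$ is $(\delta,\alpha,\varepsilon)$-RDP under this neighboring notion. *)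

theory Defs
  imports "HOL-Probability.Probability"
begin

text \<open>Terms with P(x) = 0 contribute 0.\<close>
definition renyi_div :: "real \<Rightarrow> 'a pmf \<Rightarrow> 'a pmf \<Rightarrow> ereal" where
  "renyi_div \<alpha> P Q =
     (if set_pmf P \<subseteq> set_pmf Q \<and>
         (\<lambda>x. pmf P x powr \<alpha> * pmf Q x powr (1 - \<alpha>)) summable_on UNIV
      then ereal (1 / (\<alpha> - 1) *
             ln (\<Sum>\<^sub>\<infinity>x. pmf P x powr \<alpha> * pmf Q x powr (1 - \<alpha>)))
      else \<infinity>)"

definition approx_renyi_div :: "real \<Rightarrow> real \<Rightarrow> 'a pmf \<Rightarrow> 'a pmf \<Rightarrow> ereal" where
  "approx_renyi_div \<delta> \<alpha> P Q =
     Inf {renyi_div \<alpha> P' Q' | P' P'' Q' Q''.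
            (\<forall>x. pmf P x = (1 - \<delta>) * pmf P' x + \<delta> * pmf P'' x) \<and>
            (\<forall>x. pmf Q x = (1 - \<delta>) * pmf Q' x + \<delta> * pmf Q'' x)}"

definition dataset :: "'u set \<Rightarrow> ('u \<Rightarrow> nat) \<Rightarrow> bool" where
  "dataset U X \<longleftrightarrow> finite {u. X u \<noteq> 0} \<and> {u. X u \<noteq> 0} \<subseteq> U"

definition l1_neighbors :: "nat \<Rightarrow> ('u \<Rightarrow> nat) \<Rightarrow> ('u \<Rightarrow> nat) \<Rightarrow> bool" where
  "l1_neighbors \<Delta> X X' \<longleftrightarrow>
     (\<Sum>u\<in>{u. X u \<noteq> 0} \<union> {u. X' u \<noteq> 0}. \<bar>int (X u) - int (X' u)\<bar>) \<le> int \<Delta>"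

definition partition_selection_primitive :: "(nat \<Rightarrow> real) \<Rightarrow> bool" where
  "partition_selection_primitive \<pi> \<longleftrightarrow> \<pi> 0 = 0 \<and> (\<forall>n. 0 \<le> \<pi> n \<and> \<pi> n \<le> 1)"

text \<open>The mechanism M_pi: each item u is included independently with probability pi(X u).
  Items with count 0 are included with probability pi 0 = 0, so only the (finite)
  support needs to be sampled.\<close>
definition psp_mech :: "(nat \<Rightarrow> real) \<Rightarrow> ('u \<Rightarrow> nat) \<Rightarrow> 'u set pmf" where
  "psp_mech \<pi> X = map_pmf (\<lambda>b. {u. b u})
      (Pi_pmf {u. X u \<noteq> 0} False (\<lambda>u. bernoulli_pmf (\<pi> (X u))))"

definition psp_rdp :: "'u set \<Rightarrow> real \<Rightarrow> real \<Rightarrow> real \<Rightarrow> nat \<Rightarrow> (nat \<Rightarrow> real) \<Rightarrow> bool" where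
  "psp_rdp U \<delta> \<alpha> \<epsilon> \<Delta> \<pi> \<longleftrightarrow>
     (\<forall>X X'. dataset U X \<and> dataset U X' \<and> l1_neighbors \<Delta> X X' \<longrightarrow>
        approx_renyi_div \<delta> \<alpha> (psp_mech \<pi> X) (psp_mech \<pi> X') \<le> ereal \<epsilon>)"

definition L_step :: "real \<Rightarrow> real \<Rightarrow> real \<Rightarrow> real \<Rightarrow> real" where
  "L_step \<delta> \<alpha> \<epsilon> q = (GREATEST p. p \<in> {q..1} \<and>
      approx_renyi_div \<delta> \<alpha> (bernoulli_pmf p) (bernoulli_pmf q) \<le> ereal \<epsilon> \<and>
      approx_renyi_div \<delta> \<alpha> (bernoulli_pmf q) (bernoulli_pmf p) \<le> ereal \<epsilon>)"

primrec pi_star :: "real \<Rightarrow> real \<Rightarrow> real \<Rightarrow> nat \<Rightarrow> real" where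
  "pi_star \<delta> \<alpha> \<epsilon> 0 = 0"
| "pi_star \<delta> \<alpha> \<epsilon> (Suc n) = L_step \<delta> \<alpha> \<epsilon> (pi_star \<delta> \<alpha> \<epsilon> n)"

end

(*
  Between neighbouring datasets only one count X u changes, by at most one.  Sampling the
  coordinate u separately, M_pi(X) and M_pi(X') are the same map, injective on the relevant
  support, of Ber(pi(X u)) x R and Ber(pi(X' u)) x R for one independent R; since Renyi
  divergence is unchanged by an injective map and by taking a product with a common factor,
  the delta-approximate divergence of the mechanism is at most that of the two Bernoullis.  On
  single-item datasets the mechanism is an injective image of the Bernoulli itself, so the
  converse bound holds too.  Hence pi is RDP iff each step pi(n) -> pi(n+1) is admissible in the
  sense of L, and pi* always takes the largest admissible step.

  For optimality, induct on n: if pi(n) <= pi*(n) <= pi(n+1), the step pi(n) -> pi(n+1) stays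
  admissible from the larger pi*(n), so pi(n+1) <= L(pi*(n)).  This shrinking property comes from
  quasi-convexity of D_alpha(Ber x || Ber y) in each argument (moving either argument towards the
  other decreases it), transported to delta-decompositions by interpolating the components.
  Compactness makes both the infimum in the definition of D^delta_alpha and the maximum in L(q)
  attained.
*)
theory Submission
  imports Defs
begin

section \<open>Renyi divergence between Bernoulli distributions\<close>

text \<open>For \<open>0 < y < 1\<close> this is \<open>(y (1 - y)) powr (\<alpha> - 1)\<close> times the difference between the Renyi sum
  of \<open>Ber x\<close> and \<open>Ber y\<close> and \<open>c\<close>; the rescaling keeps it continuous on the closed unit square.
  With \<open>c = exp ((\<alpha> - 1) * e)\<close> it is nonpositive iff the divergence is at most \<open>e\<close>.\<close>

definition ber_renyi_excess :: "real \<Rightarrow> real \<Rightarrow> real \<Rightarrow> real \<Rightarrow> real" where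
  "ber_renyi_excess \<alpha> c x y =
     x powr \<alpha> * (1 - y) powr (\<alpha> - 1) + (1 - x) powr \<alpha> * y powr (\<alpha> - 1)
     - c * y powr (\<alpha> - 1) * (1 - y) powr (\<alpha> - 1)"

lemma ber_renyi_excess_swap: "ber_renyi_excess \<alpha> c (1 - x) (1 - y) = ber_renyi_excess \<alpha> c x y"
  by (simp add: ber_renyi_excess_def algebra_simps)

definition ber_renyi_sum :: "real \<Rightarrow> real \<Rightarrow> real \<Rightarrow> real" where
  "ber_renyi_sum \<alpha> x y = x powr \<alpha> * y powr (1 - \<alpha>) + (1 - x) powr \<alpha> * (1 - y) powr (1 - \<alpha>)"

lemma ber_renyi_excess_eq_scaled_sum:
  assumes "0 < y" "y < 1"
  shows "ber_renyi_excess \<alpha> c x y = y powr (\<alpha> - 1) * (1 - y) powr (\<alpha> - 1) * (ber_renyi_sum \<alpha> x y - c)"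
proof -
  have "z powr (1 - \<alpha>) * z powr (\<alpha> - 1) = 1" if "0 < z" for z :: real
    using that by (simp add: powr_add [symmetric])
  with assms show ?thesis
    by (simp add: ber_renyi_excess_def ber_renyi_sum_def algebra_simps)
qed

lemma renyi_div_bool:
  fixes P Q :: "bool pmf"
  shows "renyi_div \<alpha> P Q = (if set_pmf P \<subseteq> set_pmf Q then
     ereal (1 / (\<alpha> - 1) * ln (pmf P True powr \<alpha> * pmf Q True powr (1 - \<alpha>)
                              + pmf P False powr \<alpha> * pmf Q False powr (1 - \<alpha>)))
     else \<infinity>)"
  unfolding renyi_div_def by (simp add: UNIV_bool add.commute)

lemma set_pmf_bernoulli_subset_iff:
  assumes "0 \<le> x" "x \<le> 1" "0 \<le> y" "y \<le> 1"
  shows "set_pmf (bernoulli_pmf x) \<subseteq> set_pmf (bernoulli_pmf y) \<longleftrightarrow> (0 < x \<longrightarrow> 0 < y) \<and> (x < 1 \<longrightarrow> y < 1)"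
proof -
  have "set_pmf (bernoulli_pmf x) \<subseteq> set_pmf (bernoulli_pmf y) \<longleftrightarrow>
        (\<forall>b. pmf (bernoulli_pmf x) b \<noteq> 0 \<longrightarrow> pmf (bernoulli_pmf y) b \<noteq> 0)"
    by (auto simp: set_pmf_iff)
  with assms show ?thesis by (auto simp: all_bool_eq)
qed

lemma renyi_div_bernoulli_le_iff:
  assumes \<alpha>: "1 < \<alpha>" and e: "0 \<le> e" and x: "0 \<le> x" "x \<le> 1" and y: "0 \<le> y" "y \<le> 1"
  shows "renyi_div \<alpha> (bernoulli_pmf x) (bernoulli_pmf y) \<le> ereal e
         \<longleftrightarrow> ber_renyi_excess \<alpha> (exp ((\<alpha> - 1) * e)) x y \<le> 0"
proof (cases "y = 0 \<or> y = 1")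
  case True
  with assms show ?thesis
    by (auto simp: renyi_div_bool set_pmf_bernoulli_subset_iff ber_renyi_excess_def)
next
  case False
  with y have y: "0 < y" "y < 1" by auto
  have "0 < ber_renyi_sum \<alpha> x y"
    using x y by (cases "x = 0") (auto simp: ber_renyi_sum_def intro: add_pos_nonneg)
  have "renyi_div \<alpha> (bernoulli_pmf x) (bernoulli_pmf y) = ereal (1 / (\<alpha> - 1) * ln (ber_renyi_sum \<alpha> x y))"
    using x y by (simp add: renyi_div_bool set_pmf_bernoulli_subset_iff ber_renyi_sum_def)
  also have "\<dots> \<le> ereal e \<longleftrightarrow> ln (ber_renyi_sum \<alpha> x y) \<le> (\<alpha> - 1) * e"
    using \<alpha> by (simp add: field_simps)
  also have "\<dots> \<longleftrightarrow> ber_renyi_sum \<alpha> x y \<le> exp ((\<alpha> - 1) * e)"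
    using \<open>0 < ber_renyi_sum \<alpha> x y\<close> by (metis exp_le_cancel_iff exp_ln)
  also have "\<dots> \<longleftrightarrow> ber_renyi_excess \<alpha> (exp ((\<alpha> - 1) * e)) x y \<le> 0"
    using y by (simp add: ber_renyi_excess_eq_scaled_sum mult_le_0_iff)
  finally show ?thesis .
qed

lemma ber_renyi_excess_diag_nonpos:
  assumes "1 < \<alpha>" "1 \<le> c" "0 \<le> x" "x \<le> 1"
  shows "ber_renyi_excess \<alpha> c x x \<le> 0"
proof (cases "x = 0 \<or> x = 1")
  case True
  with assms show ?thesis by (auto simp: ber_renyi_excess_def)
next
  case False
  with assms have "0 < x" "x < 1" by auto
  then have "ber_renyi_sum \<alpha> x x = 1"
    by (simp add: ber_renyi_sum_def powr_add [symmetric])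
  with \<open>0 < x\<close> \<open>x < 1\<close> assms show ?thesis
    by (simp add: ber_renyi_excess_eq_scaled_sum mult_nonneg_nonpos)
qed

text \<open>Quasi-convexity: moving either argument towards the other one preserves the bound.\<close>

lemma ber_renyi_excess_nonpos_mono_left:
  assumes \<alpha>: "1 < \<alpha>" and yt: "0 \<le> y" "y \<le> t" "t \<le> x" "x \<le> 1"
    and le: "ber_renyi_excess \<alpha> c y x \<le> 0"
  shows "ber_renyi_excess \<alpha> c t x \<le> 0"
proof -
  define g where "g s = s powr \<alpha> * (1 - x) powr (\<alpha> - 1) + (1 - s) powr \<alpha> * x powr (\<alpha> - 1)" for s
  have "g t \<le> g y"
  proof (rule DERIV_nonpos_imp_decreasing_open [OF \<open>y \<le> t\<close>])
    fix s assume s: "y < s" "s < t"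
    with yt have "0 < s" "s < 1" by auto
    have "s * (1 - x) \<le> (1 - s) * x"
      using s yt by (simp add: algebra_simps)
    then have "(s * (1 - x)) powr (\<alpha> - 1) \<le> ((1 - s) * x) powr (\<alpha> - 1)"
      using \<open>0 < s\<close> \<open>s < 1\<close> yt \<alpha> by (intro powr_mono2) auto
    then have "\<alpha> * s powr (\<alpha> - 1) * (1 - x) powr (\<alpha> - 1) - \<alpha> * (1 - s) powr (\<alpha> - 1) * x powr (\<alpha> - 1) \<le> 0"
      using \<open>0 < s\<close> \<open>s < 1\<close> yt \<alpha> by (simp add: powr_mult mult.assoc)
    moreover have "(g has_real_derivative
        \<alpha> * s powr (\<alpha> - 1) * (1 - x) powr (\<alpha> - 1) - \<alpha> * (1 - s) powr (\<alpha> - 1) * x powr (\<alpha> - 1)) (at s)"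
      unfolding g_def using \<open>0 < s\<close> \<open>s < 1\<close> by (auto intro!: derivative_eq_intros)
    ultimately show "\<exists>d. (g has_real_derivative d) (at s) \<and> d \<le> 0" by blast
  next
    show "continuous_on {y..t} g"
      unfolding g_def using yt \<alpha> by (intro continuous_intros continuous_on_powr') auto
  qed
  then show ?thesis
    using le by (simp add: ber_renyi_excess_def g_def)
qed

lemma ber_renyi_sum_antimono_right:
  assumes \<alpha>: "1 < \<alpha>" and yt: "0 < y" "y \<le> t" "t \<le> x" "x \<le> 1" "t < 1"
  shows "ber_renyi_sum \<alpha> x t \<le> ber_renyi_sum \<alpha> x y"
proof (rule DERIV_nonpos_imp_decreasing_open [OF \<open>y \<le> t\<close>])
  fix s assume s: "y < s" "s < t"
  with yt have "0 < s" "s < 1" by auto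
  have "(1 - x) / (1 - s) \<le> x / s"
    using s yt \<open>0 < s\<close> \<open>s < 1\<close> by (simp add: field_simps)
  then have "((1 - x) / (1 - s)) powr \<alpha> \<le> (x / s) powr \<alpha>"
    using s yt \<alpha> \<open>s < 1\<close> by (intro powr_mono2) auto
  then have "(1 - x) powr \<alpha> * (1 - s) powr (-\<alpha>) \<le> x powr \<alpha> * s powr (-\<alpha>)"
    using yt \<open>0 < s\<close> \<open>s < 1\<close> by (simp add: powr_divide powr_minus_divide)
  then have "x powr \<alpha> * ((1 - \<alpha>) * s powr (1 - \<alpha> - 1))
             - (1 - x) powr \<alpha> * ((1 - \<alpha>) * (1 - s) powr (1 - \<alpha> - 1)) \<le> 0"
    using \<alpha> mult_nonneg_nonneg [of "\<alpha> - 1" "x powr \<alpha> * s powr (-\<alpha>) - (1 - x) powr \<alpha> * (1 - s) powr (-\<alpha>)"]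
    by (simp add: algebra_simps)
  moreover have "((\<lambda>s. ber_renyi_sum \<alpha> x s) has_real_derivative x powr \<alpha> * ((1 - \<alpha>) * s powr (1 - \<alpha> - 1))
             - (1 - x) powr \<alpha> * ((1 - \<alpha>) * (1 - s) powr (1 - \<alpha> - 1))) (at s)"
    unfolding ber_renyi_sum_def using \<open>0 < s\<close> \<open>s < 1\<close> by (auto intro!: derivative_eq_intros)
  ultimately show "\<exists>d. ((\<lambda>s. ber_renyi_sum \<alpha> x s) has_real_derivative d) (at s) \<and> d \<le> 0" by blast
next
  show "continuous_on {y..t} (\<lambda>s. ber_renyi_sum \<alpha> x s)"
    unfolding ber_renyi_sum_def using yt by (intro continuous_intros) auto
qed

lemma ber_renyi_excess_nonpos_mono_right:
  assumes \<alpha>: "1 < \<alpha>" and c: "1 \<le> c" and yt: "0 \<le> y" "y \<le> t" "t \<le> x" "x \<le> 1"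
    and le: "ber_renyi_excess \<alpha> c x y \<le> 0"
  shows "ber_renyi_excess \<alpha> c x t \<le> 0"
proof (cases "t = x")
  case True
  with assms show ?thesis by (simp add: ber_renyi_excess_diag_nonpos)
next
  case False
  show ?thesis
  proof (cases "y = 0")
    case True
    with le yt \<alpha> have "x powr \<alpha> \<le> 0" by (simp add: ber_renyi_excess_def)
    then have "x = 0" by (metis not_le powr_gt_zero)
    with yt \<open>t \<noteq> x\<close> show ?thesis by simp
  next
    case False
    with yt \<open>t \<noteq> x\<close> have "0 < y" "t < 1" by auto
    then have "ber_renyi_sum \<alpha> x y \<le> c"
      using le yt by (simp add: ber_renyi_excess_eq_scaled_sum mult_le_0_iff)
    moreover have "ber_renyi_sum \<alpha> x t \<le> ber_renyi_sum \<alpha> x y"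
      using \<alpha> yt \<open>0 < y\<close> \<open>t < 1\<close> by (rule_tac ber_renyi_sum_antimono_right) auto
    ultimately show ?thesis
      using \<open>0 < y\<close> yt \<open>t < 1\<close> by (simp add: ber_renyi_excess_eq_scaled_sum mult_nonneg_nonpos)
  qed
qed

lemma ber_renyi_excess_nonpos_segment_left:
  assumes \<alpha>: "1 < \<alpha>" and xy: "x \<in> {0..1}" "y \<in> {0..1}" and t: "t \<in> closed_segment x y"
    and le: "ber_renyi_excess \<alpha> c y x \<le> 0"
  shows "ber_renyi_excess \<alpha> c t x \<le> 0"
proof (cases "y \<le> x")
  case True
  with t have yt: "y \<le> t" "t \<le> x"
    by (auto simp: closed_segment_eq_real_ivl split: if_splits)
  show ?thesis
    by (rule ber_renyi_excess_nonpos_mono_left [where y = y]) (use \<alpha> xy le yt in auto)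
next
  case False
  with t have yt: "1 - y \<le> 1 - t" "1 - t \<le> 1 - x"
    by (auto simp: closed_segment_eq_real_ivl split: if_splits)
  have le': "ber_renyi_excess \<alpha> c (1 - y) (1 - x) \<le> 0"
    using le by (simp only: ber_renyi_excess_swap)
  have "ber_renyi_excess \<alpha> c (1 - t) (1 - x) \<le> 0"
    by (rule ber_renyi_excess_nonpos_mono_left [where y = "1 - y"]) (use \<alpha> xy yt le' in auto)
  then show ?thesis by (simp only: ber_renyi_excess_swap)
qed

lemma ber_renyi_excess_nonpos_segment_right:
  assumes \<alpha>: "1 < \<alpha>" and c: "1 \<le> c" and xy: "x \<in> {0..1}" "y \<in> {0..1}"
    and t: "t \<in> closed_segment x y" and le: "ber_renyi_excess \<alpha> c x y \<le> 0"
  shows "ber_renyi_excess \<alpha> c x t \<le> 0"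
proof (cases "y \<le> x")
  case True
  with t have yt: "y \<le> t" "t \<le> x"
    by (auto simp: closed_segment_eq_real_ivl split: if_splits)
  show ?thesis
    by (rule ber_renyi_excess_nonpos_mono_right [where y = y]) (use \<alpha> c xy le yt in auto)
next
  case False
  with t have yt: "1 - y \<le> 1 - t" "1 - t \<le> 1 - x"
    by (auto simp: closed_segment_eq_real_ivl split: if_splits)
  have le': "ber_renyi_excess \<alpha> c (1 - x) (1 - y) \<le> 0"
    using le by (simp only: ber_renyi_excess_swap)
  have "ber_renyi_excess \<alpha> c (1 - x) (1 - t) \<le> 0"
    by (rule ber_renyi_excess_nonpos_mono_right [where y = "1 - y"]) (use \<alpha> c xy yt le' in auto)
  then show ?thesis by (simp only: ber_renyi_excess_swap)
qed

section \<open>Approximate Renyi divergence between Bernoulli distributions\<close>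

lemma continuous_on_ber_renyi_excess:
  assumes "1 < \<alpha>" "continuous_on S c" "continuous_on S x" "continuous_on S y"
    and "\<And>s. s \<in> S \<Longrightarrow> x s \<in> {0..1} \<and> y s \<in> {0..1}"
  shows "continuous_on S (\<lambda>s. ber_renyi_excess \<alpha> (c s) (x s) (y s))"
  unfolding ber_renyi_excess_def
  by (intro continuous_on_diff continuous_on_add continuous_on_mult continuous_on_powr'
      continuous_on_const assms(2-4)) (use assms in auto)


definition ber_approx_feasible :: "real \<Rightarrow> real \<Rightarrow> real \<Rightarrow> real \<Rightarrow> real \<Rightarrow> bool" where
  "ber_approx_feasible \<delta> \<alpha> c p q \<longleftrightarrow>
     (\<exists>x\<in>{0..1}. \<exists>z\<in>{0..1}. \<exists>y\<in>{0..1}. \<exists>w\<in>{0..1}.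
        p = (1 - \<delta>) * x + \<delta> * z \<and> q = (1 - \<delta>) * y + \<delta> * w \<and> ber_renyi_excess \<alpha> c x y \<le> 0)"

lemma ber_approx_feasible_diag:
  assumes "1 < \<alpha>" "1 \<le> c" "q \<in> {0..1}"
  shows "ber_approx_feasible \<delta> \<alpha> c q q"
proof -
  have "q = (1 - \<delta>) * q + \<delta> * q" by (simp add: algebra_simps)
  moreover have "ber_renyi_excess \<alpha> c q q \<le> 0"
    using assms by (intro ber_renyi_excess_diag_nonpos) auto
  ultimately show ?thesis using \<open>q \<in> {0..1}\<close>
    unfolding ber_approx_feasible_def by blast
qed

lemma ber_approx_feasible_segment_right:
  assumes \<alpha>: "1 < \<alpha>" and c: "1 \<le> c" and q': "q' \<in> closed_segment p q"
    and feas: "ber_approx_feasible \<delta> \<alpha> c p q"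
  shows "ber_approx_feasible \<delta> \<alpha> c p q'"
proof -
  obtain x z y w where xzyw: "x \<in> {0..1}" "z \<in> {0..1}" "y \<in> {0..1}" "w \<in> {0..1}"
    and p: "p = (1 - \<delta>) * x + \<delta> * z" and q: "q = (1 - \<delta>) * y + \<delta> * w"
    and le: "ber_renyi_excess \<alpha> c x y \<le> 0"
    using feas unfolding ber_approx_feasible_def by blast
  obtain u where u: "0 \<le> u" "u \<le> 1" "q' = (1 - u) * p + u * q"
    using q' by (auto simp: in_segment)
  define y' where "y' = (1 - u) * x + u * y"
  define w' where "w' = (1 - u) * z + u * w"
  have "y' \<in> closed_segment x y" "w' \<in> closed_segment z w"
    unfolding in_segment y'_def w'_def using u by (intro conjI exI [of _ u]; simp)+
  then have "y' \<in> {0..1}" "w' \<in> {0..1}"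
    using xzyw closed_segment_subset [of _ "{0..1::real}"] by blast+
  moreover have "q' = (1 - \<delta>) * y' + \<delta> * w'"
    unfolding u(3) p q y'_def w'_def by (simp add: algebra_simps)
  moreover have "ber_renyi_excess \<alpha> c x y' \<le> 0"
    using ber_renyi_excess_nonpos_segment_right [OF \<alpha> c xzyw(1,3) \<open>y' \<in> closed_segment x y\<close> le] .
  ultimately show ?thesis
    unfolding ber_approx_feasible_def using xzyw p by blast
qed

lemma ber_approx_feasible_segment_left:
  assumes \<alpha>: "1 < \<alpha>" and p': "p' \<in> closed_segment q p"
    and feas: "ber_approx_feasible \<delta> \<alpha> c p q"
  shows "ber_approx_feasible \<delta> \<alpha> c p' q"
proof -
  obtain x z y w where xzyw: "x \<in> {0..1}" "z \<in> {0..1}" "y \<in> {0..1}" "w \<in> {0..1}"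
    and p: "p = (1 - \<delta>) * x + \<delta> * z" and q: "q = (1 - \<delta>) * y + \<delta> * w"
    and le: "ber_renyi_excess \<alpha> c x y \<le> 0"
    using feas unfolding ber_approx_feasible_def by blast
  obtain u where u: "0 \<le> u" "u \<le> 1" "p' = (1 - u) * q + u * p"
    using p' by (auto simp: in_segment)
  define x' where "x' = (1 - u) * y + u * x"
  define z' where "z' = (1 - u) * w + u * z"
  have "x' \<in> closed_segment y x" "z' \<in> closed_segment w z"
    unfolding in_segment x'_def z'_def using u by (intro conjI exI [of _ u]; simp)+
  then have "x' \<in> {0..1}" "z' \<in> {0..1}"
    using xzyw closed_segment_subset [of _ "{0..1::real}"] by blast+
  moreover have "p' = (1 - \<delta>) * x' + \<delta> * z'"
    unfolding u(3) p q x'_def z'_def by (simp add: algebra_simps)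
  moreover have "ber_renyi_excess \<alpha> c x' y \<le> 0"
    using ber_renyi_excess_nonpos_segment_left [OF \<alpha> xzyw(3,1) \<open>x' \<in> closed_segment y x\<close> le] .
  ultimately show ?thesis
    unfolding ber_approx_feasible_def using xzyw q by blast
qed

lemma closed_fst_image_compact_preimage:
  fixes F :: "'a::t2_space \<times> 'b::t2_space \<Rightarrow> 'c::topological_space"
  assumes "compact B" "continuous_on B F" "closed T"
  shows "closed (fst ` (B \<inter> F -` T))"
proof -
  have "closed (B \<inter> F -` T)"
    using assms by (intro continuous_closed_preimage compact_imp_closed)
  with \<open>compact B\<close> have "compact (B \<inter> F -` T)"
    using compact_Int_closed [of B "B \<inter> F -` T"] by (simp add: Int_left_absorb)
  then show ?thesis
    by (intro compact_imp_closed compact_continuous_image continuous_on_fst continuous_on_id)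
qed

lemma closed_ber_approx_feasible:
  fixes C P Q :: "real \<Rightarrow> real"
  assumes \<alpha>: "1 < \<alpha>"
    and cont: "continuous_on {a..b} C" "continuous_on {a..b} P" "continuous_on {a..b} Q"
  shows "closed {t \<in> {a..b}. ber_approx_feasible \<delta> \<alpha> (C t) (P t) (Q t)}"
proof -
  define B :: "(real \<times> real \<times> real \<times> real \<times> real) set"
    where "B = {a..b} \<times> {0..1} \<times> {0..1} \<times> {0..1} \<times> {0..1}"
  define F where "F = (\<lambda>(t, x, z, y, w). (P t - ((1 - \<delta>) * x + \<delta> * z),
                     Q t - ((1 - \<delta>) * y + \<delta> * w), ber_renyi_excess \<alpha> (C t) x y))"
  define T :: "(real \<times> real \<times> real) set" where "T = {0} \<times> {0} \<times> {..0}"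
  have cont_fst: "continuous_on B (\<lambda>v. f (fst v))" if "continuous_on {a..b} f" for f :: "real \<Rightarrow> real"
    by (rule continuous_on_compose2 [OF that continuous_on_fst [OF continuous_on_id]])
       (auto simp: B_def)
  have "continuous_on B F"
    unfolding F_def case_prod_beta
    by (intro continuous_on_Pair continuous_on_diff continuous_on_add continuous_on_mult
        continuous_on_const continuous_on_fst continuous_on_snd continuous_on_id
        continuous_on_ber_renyi_excess [OF \<alpha>] cont_fst cont) (simp add: B_def mem_Times_iff)
  then have "closed (fst ` (B \<inter> F -` T))"
    unfolding B_def T_def
    by (intro closed_fst_image_compact_preimage compact_Times compact_Icc closed_Times) auto
  moreover have "fst ` (B \<inter> F -` T) = {t \<in> {a..b}. ber_approx_feasible \<delta> \<alpha> (C t) (P t) (Q t)}"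
  proof (intro set_eqI iffI)
    fix t assume "t \<in> fst ` (B \<inter> F -` T)"
    then obtain x z y w where "(t, x, z, y, w) \<in> B \<inter> F -` T"
      by force
    then have "t \<in> {a..b}" "x \<in> {0..1}" "z \<in> {0..1}" "y \<in> {0..1}" "w \<in> {0..1}"
      "P t = (1 - \<delta>) * x + \<delta> * z" "Q t = (1 - \<delta>) * y + \<delta> * w"
      "ber_renyi_excess \<alpha> (C t) x y \<le> 0"
      by (simp_all add: B_def F_def T_def)
    then show "t \<in> {t \<in> {a..b}. ber_approx_feasible \<delta> \<alpha> (C t) (P t) (Q t)}"
      unfolding ber_approx_feasible_def by blast
  next
    fix t assume "t \<in> {t \<in> {a..b}. ber_approx_feasible \<delta> \<alpha> (C t) (P t) (Q t)}"
    then obtain x z y w where "(t, x, z, y, w) \<in> B \<inter> F -` T"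
      unfolding ber_approx_feasible_def by (auto simp: B_def F_def T_def)
    then show "t \<in> fst ` (B \<inter> F -` T)"
      by (rule image_eqI [rotated]) simp
  qed
  ultimately show ?thesis by simp
qed

definition is_mixture :: "real \<Rightarrow> 'a pmf \<Rightarrow> 'a pmf \<Rightarrow> 'a pmf \<Rightarrow> bool" where
  "is_mixture \<delta> P P' P'' \<longleftrightarrow> (\<forall>x. pmf P x = (1 - \<delta>) * pmf P' x + \<delta> * pmf P'' x)"

lemma approx_renyi_div_le_renyi_div:
  "is_mixture \<delta> P P' P'' \<Longrightarrow> is_mixture \<delta> Q Q' Q'' \<Longrightarrow> approx_renyi_div \<delta> \<alpha> P Q \<le> renyi_div \<alpha> P' Q'"
  unfolding approx_renyi_div_def is_mixture_def by (rule Inf_lower) blast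

lemma approx_renyi_div_greatest:
  "(\<And>P' P'' Q' Q''. is_mixture \<delta> P P' P'' \<Longrightarrow> is_mixture \<delta> Q Q' Q'' \<Longrightarrow> r \<le> renyi_div \<alpha> P' Q')
   \<Longrightarrow> r \<le> approx_renyi_div \<delta> \<alpha> P Q"
  unfolding approx_renyi_div_def is_mixture_def by (rule Inf_greatest) blast

lemma approx_renyi_div_less_imp_mixtures:
  assumes "approx_renyi_div \<delta> \<alpha> P Q < r"
  obtains P' P'' Q' Q'' where "is_mixture \<delta> P P' P''" "is_mixture \<delta> Q Q' Q''" "renyi_div \<alpha> P' Q' < r"
  using assms unfolding approx_renyi_div_def is_mixture_def Inf_less_iff by blast

lemma bool_pmf_eq_bernoulli_pmf: "P = bernoulli_pmf (pmf P True)" for P :: "bool pmf"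
proof (rule pmf_eqI)
  fix b
  have "pmf P False + pmf P True = 1"
    using sum_pmf_eq_1 [of UNIV P] by (auto simp: UNIV_bool)
  then show "pmf P b = pmf (bernoulli_pmf (pmf P True)) b"
    using pmf_le_1 [of P True] by (cases b) auto
qed

lemma is_mixture_bernoulli_pmf:
  assumes "0 \<le> \<delta>" "\<delta> \<le> 1" "x \<in> {0..1}" "z \<in> {0..1}"
  shows "is_mixture \<delta> (bernoulli_pmf ((1 - \<delta>) * x + \<delta> * z)) (bernoulli_pmf x) (bernoulli_pmf z)"
proof -
  have "(1 - \<delta>) * x + \<delta> * z \<in> closed_segment x z"
    using assms unfolding in_segment by (intro exI [of _ \<delta>]) simp
  then have "(1 - \<delta>) * x + \<delta> * z \<in> {0..1}"
    using assms closed_segment_subset [of x "{0..1::real}" z] by blast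
  with assms show ?thesis
    unfolding is_mixture_def by (auto simp: all_bool_eq algebra_simps)
qed

lemma approx_renyi_div_bernoulli_le_if_feasible:
  assumes \<alpha>: "1 < \<alpha>" and e: "0 \<le> e" and \<delta>: "0 \<le> \<delta>" "\<delta> \<le> 1"
    and feas: "ber_approx_feasible \<delta> \<alpha> (exp ((\<alpha> - 1) * e)) p q"
  shows "approx_renyi_div \<delta> \<alpha> (bernoulli_pmf p) (bernoulli_pmf q) \<le> ereal e"
proof -
  obtain x z y w where xzyw: "x \<in> {0..1}" "z \<in> {0..1}" "y \<in> {0..1}" "w \<in> {0..1}"
    and p: "p = (1 - \<delta>) * x + \<delta> * z" and q: "q = (1 - \<delta>) * y + \<delta> * w"
    and le: "ber_renyi_excess \<alpha> (exp ((\<alpha> - 1) * e)) x y \<le> 0"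
    using feas unfolding ber_approx_feasible_def by blast
  have "is_mixture \<delta> (bernoulli_pmf p) (bernoulli_pmf x) (bernoulli_pmf z)"
       "is_mixture \<delta> (bernoulli_pmf q) (bernoulli_pmf y) (bernoulli_pmf w)"
    unfolding p q using \<delta> xzyw by (auto intro: is_mixture_bernoulli_pmf)
  then have "approx_renyi_div \<delta> \<alpha> (bernoulli_pmf p) (bernoulli_pmf q)
             \<le> renyi_div \<alpha> (bernoulli_pmf x) (bernoulli_pmf y)"
    by (rule approx_renyi_div_le_renyi_div)
  also have "\<dots> \<le> ereal e"
    using renyi_div_bernoulli_le_iff [OF \<alpha> e] xzyw le by simp
  finally show ?thesis .
qed

lemma ber_approx_feasible_if_approx_renyi_div_less:
  assumes \<alpha>: "1 < \<alpha>" and e: "0 \<le> e" and pq: "p \<in> {0..1}" "q \<in> {0..1}"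
    and less: "approx_renyi_div \<delta> \<alpha> (bernoulli_pmf p) (bernoulli_pmf q) < ereal e"
  shows "ber_approx_feasible \<delta> \<alpha> (exp ((\<alpha> - 1) * e)) p q"
proof -
  obtain P' P'' Q' Q'' where
    P: "is_mixture \<delta> (bernoulli_pmf p) P' P''" and Q: "is_mixture \<delta> (bernoulli_pmf q) Q' Q''"
    and less': "renyi_div \<alpha> P' Q' < ereal e"
    using less by (rule approx_renyi_div_less_imp_mixtures)
  define x z y w where "x = pmf P' True" "z = pmf P'' True" "y = pmf Q' True" "w = pmf Q'' True"
  have xzyw: "x \<in> {0..1}" "z \<in> {0..1}" "y \<in> {0..1}" "w \<in> {0..1}"
    unfolding x_z_y_w_def by (auto simp: pmf_le_1)
  have "p = (1 - \<delta>) * x + \<delta> * z" "q = (1 - \<delta>) * y + \<delta> * w"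
    using P Q pq unfolding is_mixture_def x_z_y_w_def by (auto dest: spec [of _ True])
  moreover have "renyi_div \<alpha> (bernoulli_pmf x) (bernoulli_pmf y) \<le> ereal e"
    using less' bool_pmf_eq_bernoulli_pmf [of P'] bool_pmf_eq_bernoulli_pmf [of Q']
    unfolding x_z_y_w_def by simp
  then have "ber_renyi_excess \<alpha> (exp ((\<alpha> - 1) * e)) x y \<le> 0"
    using renyi_div_bernoulli_le_iff [OF \<alpha> e] xzyw by simp
  ultimately show ?thesis
    unfolding ber_approx_feasible_def using xzyw by blast
qed

text \<open>The infimum over decompositions is attained: the levels \<open>t\<close> at which the bound \<open>e + t\<close> is
  feasible form a closed set containing \<open>{0<..1}\<close>.\<close>

lemma approx_renyi_div_bernoulli_le_iff:
  assumes \<alpha>: "1 < \<alpha>" and e: "0 \<le> e" and \<delta>: "0 \<le> \<delta>" "\<delta> \<le> 1" and pq: "p \<in> {0..1}" "q \<in> {0..1}"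
  shows "approx_renyi_div \<delta> \<alpha> (bernoulli_pmf p) (bernoulli_pmf q) \<le> ereal e
         \<longleftrightarrow> ber_approx_feasible \<delta> \<alpha> (exp ((\<alpha> - 1) * e)) p q"
proof
  assume le: "approx_renyi_div \<delta> \<alpha> (bernoulli_pmf p) (bernoulli_pmf q) \<le> ereal e"
  define S where "S = {t \<in> {0..1}. ber_approx_feasible \<delta> \<alpha> (exp ((\<alpha> - 1) * (e + t))) p q}"
  have "closed S"
    unfolding S_def using \<alpha> by (intro closed_ber_approx_feasible continuous_intros)
  have "t \<in> S" if t: "0 < t" "t \<le> 1" for t
  proof -
    have "approx_renyi_div \<delta> \<alpha> (bernoulli_pmf p) (bernoulli_pmf q) < ereal (e + t)"
      using le t by (simp add: le_less_trans)
    then have "ber_approx_feasible \<delta> \<alpha> (exp ((\<alpha> - 1) * (e + t))) p q"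
      using ber_approx_feasible_if_approx_renyi_div_less [OF \<alpha> _ pq] e t by simp
    with t show ?thesis unfolding S_def by simp
  qed
  then have "0 \<in> S"
    by (intro closed_sequentially [OF \<open>closed S\<close> _ LIMSEQ_inverse_real_of_nat])
       (simp add: field_simps)
  then show "ber_approx_feasible \<delta> \<alpha> (exp ((\<alpha> - 1) * e)) p q"
    unfolding S_def by simp
qed (rule approx_renyi_div_bernoulli_le_if_feasible [OF \<alpha> e \<delta>])

section \<open>Invariance of Renyi divergence under injective maps and products\<close>

lemma renyi_div_finite_support:
  assumes "finite F" "set_pmf P \<subseteq> F"
  shows "renyi_div \<alpha> P Q = (if set_pmf P \<subseteq> set_pmf Q then
     ereal (1 / (\<alpha> - 1) * ln (\<Sum>x\<in>F. pmf P x powr \<alpha> * pmf Q x powr (1 - \<alpha>))) else \<infinity>)"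
proof -
  define f where "f x = pmf P x powr \<alpha> * pmf Q x powr (1 - \<alpha>)" for x
  have "f x = 0" if "x \<notin> F" for x
    using that assms by (auto simp: f_def set_pmf_eq)
  then have "f summable_on UNIV" "infsum f UNIV = sum f F"
    using assms summable_on_cong_neutral [of F UNIV f f] infsum_cong_neutral [of F UNIV f f] by auto
  then show ?thesis
    unfolding renyi_div_def f_def by simp
qed

lemma pmf_map_pmf_inj_on:
  assumes "inj_on h A" "set_pmf P \<subseteq> A" "x \<in> A"
  shows "pmf (map_pmf h P) (h x) = pmf P x"
proof (cases "x \<in> set_pmf P")
  case True
  then show ?thesis
    using pmf_map_inj [of h P x] inj_on_subset [OF assms(1,2)] by blast
next
  case False
  then have "h x \<notin> h ` set_pmf P"
    using assms by (auto simp: inj_on_image_mem_iff)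
  with False show ?thesis by (simp add: pmf_map_outside set_pmf_eq)
qed

lemma renyi_div_map_pmf_inj_on:
  assumes fin: "finite (set_pmf P)" "finite (set_pmf Q)" and inj: "inj_on h (set_pmf P \<union> set_pmf Q)"
  shows "renyi_div \<alpha> (map_pmf h P) (map_pmf h Q) = renyi_div \<alpha> P Q"
proof -
  define F where "F = set_pmf P \<union> set_pmf Q"
  have F: "finite F" "set_pmf P \<subseteq> F" "set_pmf Q \<subseteq> F" using fin by (auto simp: F_def)
  have inj_F: "inj_on h F" using inj by (simp add: F_def)
  then have "(\<Sum>y\<in>h ` F. pmf (map_pmf h P) y powr \<alpha> * pmf (map_pmf h Q) y powr (1 - \<alpha>))
        = (\<Sum>x\<in>F. pmf (map_pmf h P) (h x) powr \<alpha> * pmf (map_pmf h Q) (h x) powr (1 - \<alpha>))"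
    by (simp add: sum.reindex)
  also have "\<dots> = (\<Sum>x\<in>F. pmf P x powr \<alpha> * pmf Q x powr (1 - \<alpha>))"
  proof (intro sum.cong refl)
    fix x assume "x \<in> F"
    then show "pmf (map_pmf h P) (h x) powr \<alpha> * pmf (map_pmf h Q) (h x) powr (1 - \<alpha>)
               = pmf P x powr \<alpha> * pmf Q x powr (1 - \<alpha>)"
      using pmf_map_pmf_inj_on [OF inj_F F(2) \<open>x \<in> F\<close>]
        pmf_map_pmf_inj_on [OF inj_F F(3) \<open>x \<in> F\<close>] by simp
  qed
  finally have sum_eq: "(\<Sum>y\<in>h ` F. pmf (map_pmf h P) y powr \<alpha> * pmf (map_pmf h Q) y powr (1 - \<alpha>))
        = (\<Sum>x\<in>F. pmf P x powr \<alpha> * pmf Q x powr (1 - \<alpha>))" .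
  have "h ` set_pmf P \<subseteq> h ` set_pmf Q \<longleftrightarrow> set_pmf P \<subseteq> set_pmf Q"
    using inj by (rule inj_on_image_subset_iff) auto
  moreover have "renyi_div \<alpha> (map_pmf h P) (map_pmf h Q) =
     (if set_pmf (map_pmf h P) \<subseteq> set_pmf (map_pmf h Q) then ereal (1 / (\<alpha> - 1) *
        ln (\<Sum>y\<in>h ` F. pmf (map_pmf h P) y powr \<alpha> * pmf (map_pmf h Q) y powr (1 - \<alpha>))) else \<infinity>)"
    using F by (intro renyi_div_finite_support) auto
  ultimately show ?thesis
    using renyi_div_finite_support [OF F(1,2), of \<alpha> Q] by (simp add: sum_eq)
qed

lemma renyi_div_pair_pmf:
  assumes fin: "finite (set_pmf P)" "finite (set_pmf Q)" "finite (set_pmf R)"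
  shows "renyi_div \<alpha> (pair_pmf P R) (pair_pmf Q R) = renyi_div \<alpha> P Q"
proof -
  define F where "F = set_pmf P \<union> set_pmf Q"
  have F: "finite F" "set_pmf P \<subseteq> F" using fin by (auto simp: F_def)
  have "(\<Sum>v\<in>F \<times> set_pmf R. pmf (pair_pmf P R) v powr \<alpha> * pmf (pair_pmf Q R) v powr (1 - \<alpha>))
        = (\<Sum>x\<in>F. \<Sum>r\<in>set_pmf R. pmf (pair_pmf P R) (x, r) powr \<alpha> * pmf (pair_pmf Q R) (x, r) powr (1 - \<alpha>))"
    by (simp add: sum.cartesian_product split_def)
  also have "\<dots> = (\<Sum>x\<in>F. \<Sum>r\<in>set_pmf R. (pmf P x powr \<alpha> * pmf Q x powr (1 - \<alpha>)) * pmf R r)"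
  proof (intro sum.cong refl)
    fix x r assume "r \<in> set_pmf R"
    then have "pmf R r powr \<alpha> * pmf R r powr (1 - \<alpha>) = pmf R r"
      by (simp add: pmf_positive powr_add [symmetric])
    then show "pmf (pair_pmf P R) (x, r) powr \<alpha> * pmf (pair_pmf Q R) (x, r) powr (1 - \<alpha>)
               = (pmf P x powr \<alpha> * pmf Q x powr (1 - \<alpha>)) * pmf R r"
      by (simp add: pmf_pair powr_mult algebra_simps)
  qed
  also have "\<dots> = (\<Sum>x\<in>F. pmf P x powr \<alpha> * pmf Q x powr (1 - \<alpha>))"
    by (simp add: sum_distrib_left [symmetric] sum_pmf_eq_1 fin)
  finally have "(\<Sum>v\<in>F \<times> set_pmf R. pmf (pair_pmf P R) v powr \<alpha> * pmf (pair_pmf Q R) v powr (1 - \<alpha>))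
        = (\<Sum>x\<in>F. pmf P x powr \<alpha> * pmf Q x powr (1 - \<alpha>))" .
  moreover have "set_pmf (pair_pmf P R) \<subseteq> set_pmf (pair_pmf Q R) \<longleftrightarrow> set_pmf P \<subseteq> set_pmf Q"
    using set_pmf_not_empty [of R] by auto
  moreover have "set_pmf (pair_pmf P R) \<subseteq> F \<times> set_pmf R"
    using F by auto
  ultimately show ?thesis
    using F fin renyi_div_finite_support [of "F \<times> set_pmf R" "pair_pmf P R" \<alpha> "pair_pmf Q R"]
      renyi_div_finite_support [of F P \<alpha> Q] by (simp del: set_pair_pmf)
qed

lemma is_mixture_map_pmf:
  assumes "is_mixture \<delta> P P' P''"
  shows "is_mixture \<delta> (map_pmf g P) (map_pmf g P') (map_pmf g P'')"
  unfolding is_mixture_def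
proof
  fix y
  have "pmf (map_pmf g P) y = infsetsum (\<lambda>x. (1 - \<delta>) * pmf P' x + \<delta> * pmf P'' x) (g -` {y})"
    using assms by (simp add: is_mixture_def pmf_map measure_pmf_conv_infsetsum)
  also have "\<dots> = (1 - \<delta>) * infsetsum (pmf P') (g -` {y}) + \<delta> * infsetsum (pmf P'') (g -` {y})"
    by (simp add: infsetsum_add abs_summable_on_cmult_right infsetsum_cmult_right pmf_abs_summable)
  also have "\<dots> = (1 - \<delta>) * pmf (map_pmf g P') y + \<delta> * pmf (map_pmf g P'') y"
    by (simp add: pmf_map measure_pmf_conv_infsetsum)
  finally show "pmf (map_pmf g P) y = (1 - \<delta>) * pmf (map_pmf g P') y + \<delta> * pmf (map_pmf g P'') y" .
qed

lemma is_mixture_pair_pmf: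
  fixes P :: "'a pmf" and R :: "'b pmf"
  assumes "is_mixture \<delta> P P' P''"
  shows "is_mixture \<delta> (pair_pmf P R) (pair_pmf P' R) (pair_pmf P'' R)"
  unfolding is_mixture_def
proof
  fix v :: "'a \<times> 'b"
  obtain a b where v: "v = (a, b)" by (cases v)
  have "pmf P a = (1 - \<delta>) * pmf P' a + \<delta> * pmf P'' a"
    using assms unfolding is_mixture_def by blast
  then show "pmf (pair_pmf P R) v = (1 - \<delta>) * pmf (pair_pmf P' R) v + \<delta> * pmf (pair_pmf P'' R) v"
    unfolding v pmf_pair by (simp add: distrib_right mult.assoc)
qed

lemma set_pmf_subset_if_mixture:
  assumes "is_mixture \<delta> P P' P''" "0 \<le> \<delta>" "\<delta> \<le> 1"
  shows "\<delta> < 1 \<Longrightarrow> set_pmf P' \<subseteq> set_pmf P" and "0 < \<delta> \<Longrightarrow> set_pmf P'' \<subseteq> set_pmf P"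
proof -
  have "(1 - \<delta>) * pmf P' x = 0 \<and> \<delta> * pmf P'' x = 0" if "pmf P x = 0" for x
    using assms that unfolding is_mixture_def
    by (metis add_nonneg_eq_0_iff diff_ge_0_iff_ge mult_nonneg_nonneg pmf_nonneg)
  then show "\<delta> < 1 \<Longrightarrow> set_pmf P' \<subseteq> set_pmf P" and "0 < \<delta> \<Longrightarrow> set_pmf P'' \<subseteq> set_pmf P"
    by (auto simp: set_pmf_eq)
qed

lemma map_pmf_inv_cancel:
  "set_pmf P \<subseteq> range h \<Longrightarrow> map_pmf h (map_pmf (inv h) P) = P"
  by (simp add: map_pmf_comp f_inv_into_f subset_iff cong: map_pmf_cong)

lemma is_mixture_map_pmf_inv:
  assumes h: "inj h" and \<delta>: "0 \<le> \<delta>" "\<delta> < 1" and mix: "is_mixture \<delta> (map_pmf h A) P' P''"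
  shows "is_mixture \<delta> A (map_pmf (inv h) P') (map_pmf (inv h) P'')"
  unfolding is_mixture_def
proof
  fix x
  have "set_pmf P' \<subseteq> range h"
    using set_pmf_subset_if_mixture(1) [OF mix] \<delta> by auto
  then have "pmf P' (h x) = pmf (map_pmf (inv h) P') x"
    by (metis map_pmf_inv_cancel pmf_map_inj' h)
  moreover have "\<delta> * pmf P'' (h x) = \<delta> * pmf (map_pmf (inv h) P'') x"
  proof (cases "\<delta> = 0")
    case False
    then have "set_pmf P'' \<subseteq> range h"
      using set_pmf_subset_if_mixture(2) [OF mix] \<delta> by auto
    then show ?thesis
      by (metis map_pmf_inv_cancel pmf_map_inj' h)
  qed simp
  moreover have "pmf A x = pmf (map_pmf h A) (h x)"
    using h by (simp add: pmf_map_inj')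
  then have "pmf A x = (1 - \<delta>) * pmf P' (h x) + \<delta> * pmf P'' (h x)"
    using mix unfolding is_mixture_def by simp
  ultimately show "pmf A x = (1 - \<delta>) * pmf (map_pmf (inv h) P') x + \<delta> * pmf (map_pmf (inv h) P'') x"
    by simp
qed

lemma approx_renyi_div_le_map_pmf_inj:
  fixes A B :: "'a::finite pmf"
  assumes h: "inj h" and \<delta>: "0 \<le> \<delta>" "\<delta> < 1"
  shows "approx_renyi_div \<delta> \<alpha> A B \<le> approx_renyi_div \<delta> \<alpha> (map_pmf h A) (map_pmf h B)"
proof (rule approx_renyi_div_greatest)
  fix P' P'' Q' Q''
  assume P: "is_mixture \<delta> (map_pmf h A) P' P''" and Q: "is_mixture \<delta> (map_pmf h B) Q' Q''"
  have "approx_renyi_div \<delta> \<alpha> A B \<le> renyi_div \<alpha> (map_pmf (inv h) P') (map_pmf (inv h) Q')"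
    using is_mixture_map_pmf_inv [OF h \<delta> P] is_mixture_map_pmf_inv [OF h \<delta> Q]
    by (rule approx_renyi_div_le_renyi_div)
  also have "\<dots> = renyi_div \<alpha> (map_pmf h (map_pmf (inv h) P')) (map_pmf h (map_pmf (inv h) Q'))"
    using h by (intro renyi_div_map_pmf_inj_on [symmetric]) (auto intro: inj_on_subset)
  also have "\<dots> = renyi_div \<alpha> P' Q'"
    using set_pmf_subset_if_mixture(1) [OF P] set_pmf_subset_if_mixture(1) [OF Q] \<delta>
    by (subst (1 2) map_pmf_inv_cancel) auto
  finally show "approx_renyi_div \<delta> \<alpha> A B \<le> renyi_div \<alpha> P' Q'" .
qed

lemma approx_renyi_div_map_pair_pmf_le:
  fixes A B :: "'a::finite pmf"
  assumes R: "finite (set_pmf R)" and g: "inj_on g (UNIV \<times> set_pmf R)"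
  shows "approx_renyi_div \<delta> \<alpha> (map_pmf g (pair_pmf A R)) (map_pmf g (pair_pmf B R))
         \<le> approx_renyi_div \<delta> \<alpha> A B"
proof (rule approx_renyi_div_greatest)
  fix P' P'' Q' Q''
  assume P: "is_mixture \<delta> A P' P''" and Q: "is_mixture \<delta> B Q' Q''"
  have "approx_renyi_div \<delta> \<alpha> (map_pmf g (pair_pmf A R)) (map_pmf g (pair_pmf B R))
        \<le> renyi_div \<alpha> (map_pmf g (pair_pmf P' R)) (map_pmf g (pair_pmf Q' R))"
    by (rule approx_renyi_div_le_renyi_div [OF is_mixture_map_pmf [OF is_mixture_pair_pmf [OF P]]
          is_mixture_map_pmf [OF is_mixture_pair_pmf [OF Q]]])
  also have "\<dots> = renyi_div \<alpha> (pair_pmf P' R) (pair_pmf Q' R)"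
    using R by (intro renyi_div_map_pmf_inj_on) (auto intro: inj_on_subset [OF g])
  also have "\<dots> = renyi_div \<alpha> P' Q'"
    using R by (intro renyi_div_pair_pmf) auto
  finally show "approx_renyi_div \<delta> \<alpha> (map_pmf g (pair_pmf A R)) (map_pmf g (pair_pmf B R))
                \<le> renyi_div \<alpha> P' Q'" .
qed

section \<open>The partition selection mechanism\<close>

definition collect_upd :: "'u \<Rightarrow> bool \<times> ('u \<Rightarrow> bool) \<Rightarrow> 'u set" where
  "collect_upd u = (\<lambda>(b, f). Collect (f(u := b)))"

lemma psp_mech_split:
  assumes fin: "finite {v. X v \<noteq> 0}" and \<pi>0: "\<pi> 0 = 0"
  shows "psp_mech \<pi> X = map_pmf (collect_upd u) (pair_pmf (bernoulli_pmf (\<pi> (X u)))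
           (Pi_pmf ({v. X v \<noteq> 0} - {u}) False (\<lambda>v. bernoulli_pmf (\<pi> (X v)))))"
proof -
  define T where "T = {v. X v \<noteq> 0} - {u}"
  define p where "p v = bernoulli_pmf (\<pi> (X v))" for v
  have T: "finite T" "u \<notin> T" using fin by (auto simp: T_def)
  show ?thesis
  proof (cases "X u = 0")
    case True
    then have supp: "{v. X v \<noteq> 0} = T" by (auto simp: T_def)
    have "f(u := False) = f" if "f \<in> set_pmf (Pi_pmf T False p)" for f
      using set_Pi_pmf_subset [OF T(1), of False p] that T(2) by (auto simp: fun_upd_idem_iff)
    then have "map_pmf (\<lambda>f. collect_upd u (False, f)) (Pi_pmf T False p)
               = map_pmf (\<lambda>f. Collect f) (Pi_pmf T False p)"
      by (intro map_pmf_cong refl) (simp add: collect_upd_def)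
    moreover have "p u = return_pmf False"
      using True \<pi>0 by (auto simp: p_def intro: pmf_eqI split: split_indicator)
    moreover have "T - {u} = T" using T(2) by blast
    ultimately show ?thesis
      unfolding psp_mech_def supp T_def [symmetric] p_def [symmetric]
      by (simp add: pair_return_pmf1 map_pmf_comp)
  next
    case False
    then have supp: "{v. X v \<noteq> 0} = insert u T" by (auto simp: T_def)
    have "(\<lambda>x. Collect (case x of (y, f) \<Rightarrow> f(u := y))) = collect_upd u"
      by (auto simp: collect_upd_def fun_eq_iff)
    then show ?thesis
      unfolding psp_mech_def supp Pi_pmf_insert [OF T] T_def [symmetric] p_def [symmetric]
      by (simp add: map_pmf_comp T)
  qed
qed

lemma inj_on_collect_upd:
  assumes T: "finite T" "u \<notin> T"
  shows "inj_on (collect_upd u) (UNIV \<times> set_pmf (Pi_pmf T False p))"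
proof (rule inj_onI, clarify)
  fix b f b' f'
  assume f: "f \<in> set_pmf (Pi_pmf T False p)" and f': "f' \<in> set_pmf (Pi_pmf T False p)"
    and eq: "collect_upd u (b, f) = collect_upd u (b', f')"
  then have upd: "f(u := b) = f'(u := b')"
    by (simp add: collect_upd_def set_eq_iff fun_eq_iff)
  have "f u = f' u"
    using set_Pi_pmf_subset [OF T(1), of False p] f f' T(2) by auto
  show "b = b' \<and> f = f'"
  proof
    show "b = b'" using fun_cong [OF upd, of u] by simp
    show "f = f'"
    proof
      fix v show "f v = f' v"
        using fun_cong [OF upd, of v] \<open>f u = f' u\<close> by (cases "v = u") auto
    qed
  qed
qed

lemma finite_set_Pi_pmf: "finite T \<Longrightarrow> finite (set_pmf (Pi_pmf T d (p :: 'u \<Rightarrow> 'b::finite pmf)))"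
  by (rule finite_subset [OF set_Pi_pmf_subset']) auto


lemma approx_renyi_div_psp_mech_le:
  assumes \<pi>0: "\<pi> 0 = 0" and fin: "finite {v. X v \<noteq> 0}" "finite {v. X' v \<noteq> 0}"
    and agree: "\<And>v. v \<noteq> u \<Longrightarrow> X v = X' v"
  shows "approx_renyi_div \<delta> \<alpha> (psp_mech \<pi> X) (psp_mech \<pi> X')
         \<le> approx_renyi_div \<delta> \<alpha> (bernoulli_pmf (\<pi> (X u))) (bernoulli_pmf (\<pi> (X' u)))"
proof -
  define T where "T = {v. X v \<noteq> 0} - {u}"
  have T: "finite T" "u \<notin> T" using fin by (auto simp: T_def)
  have T': "{v. X' v \<noteq> 0} - {u} = T" using agree by (auto simp: T_def)
  define R where "R = Pi_pmf T False (\<lambda>v. bernoulli_pmf (\<pi> (X v)))"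
  have "Pi_pmf T False (\<lambda>v. bernoulli_pmf (\<pi> (X' v))) = R"
    unfolding R_def by (intro Pi_pmf_cong refl) (metis agree T(2))
  then have "psp_mech \<pi> X = map_pmf (collect_upd u) (pair_pmf (bernoulli_pmf (\<pi> (X u))) R)"
            "psp_mech \<pi> X' = map_pmf (collect_upd u) (pair_pmf (bernoulli_pmf (\<pi> (X' u))) R)"
    using psp_mech_split [where X = X and u = u and \<pi> = \<pi>, OF fin(1) \<pi>0]
      psp_mech_split [where X = X' and u = u and \<pi> = \<pi>, OF fin(2) \<pi>0]
    unfolding T' by (simp_all add: R_def T_def)
  then show ?thesis
    using approx_renyi_div_map_pair_pmf_le [OF finite_set_Pi_pmf [OF T(1)] inj_on_collect_upd [OF T]]
    by (simp add: R_def)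
qed

lemma psp_mech_singleton:
  assumes "\<pi> 0 = 0"
  shows "psp_mech \<pi> (\<lambda>v. if v = u then m else 0)
         = map_pmf (\<lambda>b. if b then {u} else {}) (bernoulli_pmf (\<pi> m))"
proof -
  define X where "X = (\<lambda>v. if v = u then m else (0::nat))"
  have "finite {v. X v \<noteq> 0}"
    by (rule finite_subset [of _ "{u}"]) (auto simp: X_def)
  then have "psp_mech \<pi> X = map_pmf (collect_upd u) (pair_pmf (bernoulli_pmf (\<pi> (X u)))
               (Pi_pmf ({v. X v \<noteq> 0} - {u}) False (\<lambda>v. bernoulli_pmf (\<pi> (X v)))))"
    using assms by (rule psp_mech_split)
  also have "{v. X v \<noteq> 0} - {u} = {}" by (auto simp: X_def)
  finally have "psp_mech \<pi> X = map_pmf (collect_upd u) (pair_pmf (bernoulli_pmf (\<pi> m)) (return_pmf (\<lambda>_. False)))"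
    by (simp add: X_def)
  moreover have "collect_upd u (b, \<lambda>_. False) = (if b then {u} else {})" for b
    by (auto simp: collect_upd_def split: if_splits)
  ultimately have "psp_mech \<pi> X = map_pmf (\<lambda>b. if b then {u} else {}) (bernoulli_pmf (\<pi> m))"
    by (simp add: pair_return_pmf2 map_pmf_comp)
  then show ?thesis by (simp add: X_def)
qed

lemma l1_neighbors_1_cases:
  assumes fin: "finite {v. X v \<noteq> 0}" "finite {v. X' v \<noteq> 0}" and nb: "l1_neighbors 1 X X'"
  obtains u where "\<And>v. v \<noteq> u \<Longrightarrow> X v = X' v"
    and "X' u = X u \<or> X' u = Suc (X u) \<or> X u = Suc (X' u)"
proof (cases "X = X'")
  case False
  then obtain u where u: "X u \<noteq> X' u" by auto
  define S where "S = {v. X v \<noteq> 0} \<union> {v. X' v \<noteq> 0}"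
  define d where "d v = \<bar>int (X v) - int (X' v)\<bar>" for v
  have "finite S" "u \<in> S" using fin u by (auto simp: S_def)
  then have "d u + sum d (S - {u}) \<le> 1"
    using nb by (simp add: l1_neighbors_def S_def d_def sum.remove)
  moreover have "1 \<le> d u" using u by (auto simp: d_def)
  moreover have "0 \<le> sum d (S - {u})" by (simp add: d_def sum_nonneg)
  ultimately have "sum d (S - {u}) = 0" "d u = 1" by linarith+
  then have "d v = 0" if "v \<in> S - {u}" for v
    using that \<open>finite S\<close> by (subst (asm) sum_nonneg_eq_0_iff) (auto simp: d_def)
  then have "X v = X' v" if "v \<noteq> u" for v
    using that by (cases "v \<in> S") (auto simp: d_def S_def)
  moreover have "X' u = Suc (X u) \<or> X u = Suc (X' u)"
    using \<open>d u = 1\<close> by (simp add: d_def) linarith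
  ultimately show ?thesis using that by blast
qed (use that in blast)

lemma l1_neighbors_singleton:
  "l1_neighbors 1 (\<lambda>v. if v = u then Suc m else 0) (\<lambda>v. if v = u then m else 0)"
  "l1_neighbors 1 (\<lambda>v. if v = u then m else 0) (\<lambda>v. if v = u then Suc m else 0)"
proof -
  have "{v. (if v = u then Suc m else 0) \<noteq> 0} \<union> {v. (if v = u then m else 0) \<noteq> (0::nat)} = {u}"
       "{v. (if v = u then m else 0) \<noteq> 0} \<union> {v. (if v = u then Suc m else 0) \<noteq> (0::nat)} = {u}"
    by auto
  then show "l1_neighbors 1 (\<lambda>v. if v = u then Suc m else 0) (\<lambda>v. if v = u then m else 0)"
            "l1_neighbors 1 (\<lambda>v. if v = u then m else 0) (\<lambda>v. if v = u then Suc m else 0)"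
    unfolding l1_neighbors_def by simp_all
qed

section \<open>Optimality of \<open>pi_star\<close>\<close>

definition L_feasible :: "real \<Rightarrow> real \<Rightarrow> real \<Rightarrow> real \<Rightarrow> real set" where
  "L_feasible \<delta> \<alpha> \<epsilon> q = {p \<in> {q..1}.
      approx_renyi_div \<delta> \<alpha> (bernoulli_pmf p) (bernoulli_pmf q) \<le> ereal \<epsilon> \<and>
      approx_renyi_div \<delta> \<alpha> (bernoulli_pmf q) (bernoulli_pmf p) \<le> ereal \<epsilon>}"

locale renyi_dp_params =
  fixes \<delta> \<alpha> \<epsilon> :: real
  assumes \<alpha>_gt_1: "1 < \<alpha>" and \<epsilon>_pos: "0 < \<epsilon>" and \<delta>_nonneg: "0 \<le> \<delta>" and \<delta>_lt_1: "\<delta> < 1"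
begin

lemma L_feasible_eq:
  assumes "q \<in> {0..1}"
  shows "L_feasible \<delta> \<alpha> \<epsilon> q = {q..1}
           \<inter> {p \<in> {0..1}. ber_approx_feasible \<delta> \<alpha> (exp ((\<alpha> - 1) * \<epsilon>)) p q}
           \<inter> {p \<in> {0..1}. ber_approx_feasible \<delta> \<alpha> (exp ((\<alpha> - 1) * \<epsilon>)) q p}"
  using assms approx_renyi_div_bernoulli_le_iff [OF \<alpha>_gt_1 _ \<delta>_nonneg less_imp_le [OF \<delta>_lt_1], of \<epsilon>] \<epsilon>_pos
  by (auto simp: L_feasible_def)

lemma compact_L_feasible: "q \<in> {0..1} \<Longrightarrow> compact (L_feasible \<delta> \<alpha> \<epsilon> q)"
  unfolding L_feasible_eq
  by (intro compact_Int_closed compact_Icc closed_ber_approx_feasible [OF \<alpha>_gt_1] continuous_intros)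

lemma self_in_L_feasible:
  assumes "q \<in> {0..1}"
  shows "q \<in> L_feasible \<delta> \<alpha> \<epsilon> q"
proof -
  have "1 \<le> exp ((\<alpha> - 1) * \<epsilon>)" using \<alpha>_gt_1 \<epsilon>_pos by simp
  with assms show ?thesis
    unfolding L_feasible_eq [OF assms] using ber_approx_feasible_diag [OF \<alpha>_gt_1] by auto
qed

lemma L_step_greatest:
  assumes "q \<in> {0..1}"
  shows L_step_in_L_feasible: "L_step \<delta> \<alpha> \<epsilon> q \<in> L_feasible \<delta> \<alpha> \<epsilon> q"
    and le_L_step: "p \<in> L_feasible \<delta> \<alpha> \<epsilon> q \<Longrightarrow> p \<le> L_step \<delta> \<alpha> \<epsilon> q"
proof -
  obtain s where s: "s \<in> L_feasible \<delta> \<alpha> \<epsilon> q" "\<forall>t\<in>L_feasible \<delta> \<alpha> \<epsilon> q. t \<le> s"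
    using compact_attains_sup [OF compact_L_feasible [OF assms]] self_in_L_feasible [OF assms] by blast
  then have "L_step \<delta> \<alpha> \<epsilon> q = s"
    unfolding L_step_def by (intro Greatest_equality) (auto simp: L_feasible_def)
  with s show "L_step \<delta> \<alpha> \<epsilon> q \<in> L_feasible \<delta> \<alpha> \<epsilon> q"
    and "p \<in> L_feasible \<delta> \<alpha> \<epsilon> q \<Longrightarrow> p \<le> L_step \<delta> \<alpha> \<epsilon> q" by auto
qed

lemma L_feasible_shrink:
  assumes q: "0 \<le> q" "q \<le> q'" "q' \<le> p" and p: "p \<in> L_feasible \<delta> \<alpha> \<epsilon> q"
  shows "p \<in> L_feasible \<delta> \<alpha> \<epsilon> q'"
proof -
  have "p \<le> 1" using p by (simp add: L_feasible_def)
  with q have "q \<in> {0..1}" "q' \<in> {0..1}" "q' \<in> closed_segment p q"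
    by (auto simp: closed_segment_eq_real_ivl)
  have "1 \<le> exp ((\<alpha> - 1) * \<epsilon>)" using \<alpha>_gt_1 \<epsilon>_pos by simp
  with p \<open>q' \<in> closed_segment p q\<close> show ?thesis
    unfolding L_feasible_eq [OF \<open>q \<in> {0..1}\<close>] L_feasible_eq [OF \<open>q' \<in> {0..1}\<close>]
    using ber_approx_feasible_segment_right [OF \<alpha>_gt_1] ber_approx_feasible_segment_left [OF \<alpha>_gt_1]
      q by auto
qed

lemma pi_star_in_unit: "pi_star \<delta> \<alpha> \<epsilon> n \<in> {0..1}"
proof (induction n)
  case (Suc n)
  then show ?case using L_step_in_L_feasible [OF Suc] by (auto simp: L_feasible_def)
qed simp

lemma pi_star_Suc_in_L_feasible: "pi_star \<delta> \<alpha> \<epsilon> (Suc n) \<in> L_feasible \<delta> \<alpha> \<epsilon> (pi_star \<delta> \<alpha> \<epsilon> n)"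
  using L_step_in_L_feasible [OF pi_star_in_unit] by simp

lemma pi_star_le_Suc: "pi_star \<delta> \<alpha> \<epsilon> n \<le> pi_star \<delta> \<alpha> \<epsilon> (Suc n)"
  using pi_star_Suc_in_L_feasible by (simp add: L_feasible_def)

lemma psp_rdp_pi_star:
  fixes U :: "'u set"
  shows "psp_rdp U \<delta> \<alpha> \<epsilon> 1 (pi_star \<delta> \<alpha> \<epsilon>)"
  unfolding psp_rdp_def
proof (intro allI impI, elim conjE)
  fix X X' :: "'u \<Rightarrow> nat"
  assume "dataset U X" "dataset U X'" and nb: "l1_neighbors 1 X X'"
  then have fin: "finite {v. X v \<noteq> 0}" "finite {v. X' v \<noteq> 0}"
    by (simp_all add: dataset_def)
  obtain u where agree: "\<And>v. v \<noteq> u \<Longrightarrow> X v = X' v"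
    and step: "X' u = X u \<or> X' u = Suc (X u) \<or> X u = Suc (X' u)"
    using l1_neighbors_1_cases [OF fin nb] by blast
  have "approx_renyi_div \<delta> \<alpha> (psp_mech (pi_star \<delta> \<alpha> \<epsilon>) X) (psp_mech (pi_star \<delta> \<alpha> \<epsilon>) X')
        \<le> approx_renyi_div \<delta> \<alpha> (bernoulli_pmf (pi_star \<delta> \<alpha> \<epsilon> (X u)))
             (bernoulli_pmf (pi_star \<delta> \<alpha> \<epsilon> (X' u)))"
    by (rule approx_renyi_div_psp_mech_le) (use fin agree in simp_all)
  also have "\<dots> \<le> ereal \<epsilon>"
    using step self_in_L_feasible [OF pi_star_in_unit] pi_star_Suc_in_L_feasible
    by (auto simp: L_feasible_def)
  finally show "approx_renyi_div \<delta> \<alpha> (psp_mech (pi_star \<delta> \<alpha> \<epsilon>) X) (psp_mech (pi_star \<delta> \<alpha> \<epsilon>) X')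
                \<le> ereal \<epsilon>" .
qed

lemma psp_rdp_imp_L_feasible:
  assumes u: "u \<in> U" and \<pi>: "partition_selection_primitive \<pi>" and rdp: "psp_rdp U \<delta> \<alpha> \<epsilon> 1 \<pi>"
    and le: "\<pi> m \<le> \<pi> (Suc m)"
  shows "\<pi> (Suc m) \<in> L_feasible \<delta> \<alpha> \<epsilon> (\<pi> m)"
proof -
  define X where "X k = (\<lambda>v. if v = u then k else (0::nat))" for k
  have "dataset U (X k)" for k
    using u by (auto simp: dataset_def X_def intro: finite_subset [of _ "{u}"])
  then have rdp_X: "approx_renyi_div \<delta> \<alpha> (psp_mech \<pi> (X k)) (psp_mech \<pi> (X k')) \<le> ereal \<epsilon>"
    if "l1_neighbors 1 (X k) (X k')" for k k'
    using rdp that unfolding psp_rdp_def by blast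
  have "\<pi> 0 = 0" using \<pi> by (simp add: partition_selection_primitive_def)
  have "inj (\<lambda>b. if b then {u} else {})" by (rule injI) (simp split: if_splits)
  then have ber_le_mech: "approx_renyi_div \<delta> \<alpha> (bernoulli_pmf (\<pi> k)) (bernoulli_pmf (\<pi> k'))
                 \<le> approx_renyi_div \<delta> \<alpha> (psp_mech \<pi> (X k)) (psp_mech \<pi> (X k'))" for k k'
    unfolding X_def psp_mech_singleton [where \<pi> = \<pi>, OF \<open>\<pi> 0 = 0\<close>]
    by (rule approx_renyi_div_le_map_pmf_inj [OF _ \<delta>_nonneg \<delta>_lt_1])
  have "l1_neighbors 1 (X (Suc m)) (X m)" "l1_neighbors 1 (X m) (X (Suc m))"
    unfolding X_def by (rule l1_neighbors_singleton)+
  then have "approx_renyi_div \<delta> \<alpha> (bernoulli_pmf (\<pi> (Suc m))) (bernoulli_pmf (\<pi> m)) \<le> ereal \<epsilon>"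
            "approx_renyi_div \<delta> \<alpha> (bernoulli_pmf (\<pi> m)) (bernoulli_pmf (\<pi> (Suc m))) \<le> ereal \<epsilon>"
    using ber_le_mech rdp_X by (blast intro: order_trans)+
  moreover have "\<pi> (Suc m) \<le> 1" using \<pi> by (simp add: partition_selection_primitive_def)
  ultimately show ?thesis
    using le by (simp add: L_feasible_def)
qed

text \<open>If \<open>\<pi>\<close> overtook \<open>pi_star\<close> at \<open>Suc n\<close>, its last step would also be admissible from the larger
  value \<open>pi_star n\<close> (by \<open>L_feasible_shrink\<close>), contradicting the maximality of \<open>L_step\<close>.\<close>

lemma psp_rdp_le_pi_star:
  assumes "U \<noteq> {}" and \<pi>: "partition_selection_primitive \<pi>" and rdp: "psp_rdp U \<delta> \<alpha> \<epsilon> 1 \<pi>"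
  shows "\<pi> n \<le> pi_star \<delta> \<alpha> \<epsilon> n"
proof (induction n)
  case 0
  then show ?case using \<pi> by (simp add: partition_selection_primitive_def)
next
  case (Suc n)
  show ?case
  proof (cases "\<pi> (Suc n) \<le> pi_star \<delta> \<alpha> \<epsilon> n")
    case True
    then show ?thesis using pi_star_le_Suc [of n] by linarith
  next
    case False
    obtain u where "u \<in> U" using assms(1) by blast
    have "0 \<le> \<pi> n" using \<pi> by (simp add: partition_selection_primitive_def)
    have "\<pi> (Suc n) \<in> L_feasible \<delta> \<alpha> \<epsilon> (\<pi> n)"
      using psp_rdp_imp_L_feasible [OF \<open>u \<in> U\<close> \<pi> rdp] Suc False by simp
    then have "\<pi> (Suc n) \<in> L_feasible \<delta> \<alpha> \<epsilon> (pi_star \<delta> \<alpha> \<epsilon> n)"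
      using L_feasible_shrink \<open>0 \<le> \<pi> n\<close> Suc False by simp
    then show ?thesis
      using le_L_step [OF pi_star_in_unit] by simp
  qed
qed

end

theorem mainTheorem3:
  fixes U :: "'u set" and \<alpha> \<epsilon> \<delta> :: real
  assumes "U \<noteq> {}" and "\<alpha> > 1" and "\<epsilon> > 0" and "0 \<le> \<delta>" and "\<delta> < 1"
  shows "partition_selection_primitive (pi_star \<delta> \<alpha> \<epsilon>)
       \<and> psp_rdp U \<delta> \<alpha> \<epsilon> 1 (pi_star \<delta> \<alpha> \<epsilon>)
       \<and> (\<forall>\<pi>. partition_selection_primitive \<pi> \<and> psp_rdp U \<delta> \<alpha> \<epsilon> 1 \<pi>
              \<longrightarrow> (\<forall>n. \<pi> n \<le> pi_star \<delta> \<alpha> \<epsilon> n))"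
proof -
  interpret renyi_dp_params \<delta> \<alpha> \<epsilon>
    using assms by unfold_locales auto
  have "partition_selection_primitive (pi_star \<delta> \<alpha> \<epsilon>)"
    using pi_star_in_unit by (simp add: partition_selection_primitive_def)
  then show ?thesis
    using psp_rdp_pi_star psp_rdp_le_pi_star [OF assms(1)] by blast
qed

end
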